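(* Let $n\ge 3$. The prism $C_n\times K_2$ is $(a,d)$-distance antimagic for some integers $a$ and $d\ge0$ if and only if $d=1$.
   Context: The prism $C_n\times K_2$ is the Cartesian product of the cycle $C_n$ and $K_2$: it has vertices $x_1,\dots,x_n,y_1,\dots,y_n$, with $x_1\cdots x_nx_1$ and $y_1\cdots y_ny_1$ cycles and additional edges $x_iy_i$ for $i=1,\dots,n$; it is $3$-regular of order $2n$. For a graph $G=(V,E)$ with $v=|V|$ and a bijection $f:V\to\{1,\dots,v\}$, the vertex-weight of $x$ is $w(x)=\sum_{y\in N(x)}f(y)$ with $N(x)$ the set of neighbours of $x$. For integers $a$ and $d\ge0$, $f$ is an $(a,d)$-distance antimagic labeling if the multiset of vertex-weights equals $\{a,a+d,\dots,a+(v-1)d\}$; $G$ is $(a,d)$-distance antimagic if it admits such a labeling. *)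

theory Defs
  imports Main "HOL-Library.Multiset"
begin

definition nbhd :: "'v set \<Rightarrow> ('v \<Rightarrow> 'v \<Rightarrow> bool) \<Rightarrow> 'v \<Rightarrow> 'v set" where
  "nbhd V adj x = {y \<in> V. adj x y}"

definition vertex_weight :: "'v set \<Rightarrow> ('v \<Rightarrow> 'v \<Rightarrow> bool) \<Rightarrow> ('v \<Rightarrow> nat) \<Rightarrow> 'v \<Rightarrow> int" where
  "vertex_weight V adj f x = (\<Sum>y\<in>nbhd V adj x. int (f y))"

definition dist_antimagic_labeling ::
  "'v set \<Rightarrow> ('v \<Rightarrow> 'v \<Rightarrow> bool) \<Rightarrow> int \<Rightarrow> int \<Rightarrow> ('v \<Rightarrow> nat) \<Rightarrow> bool" where
  "dist_antimagic_labeling V adj a d f \<longleftrightarrow>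
     bij_betw f V {1..card V} \<and>
     image_mset (vertex_weight V adj f) (mset_set V) =
       mset (map (\<lambda>i. a + int i * d) [0..<card V])"

definition dist_antimagic :: "'v set \<Rightarrow> ('v \<Rightarrow> 'v \<Rightarrow> bool) \<Rightarrow> int \<Rightarrow> int \<Rightarrow> bool" where
  "dist_antimagic V adj a d \<longleftrightarrow> d \<ge> 0 \<and> (\<exists>f. dist_antimagic_labeling V adj a d f)"

text \<open>The prism C_n x K_2: vertex (i, False) is x_(i+1), vertex (i, True) is y_(i+1), for i < n.\<close>
definition prism_V :: "nat \<Rightarrow> (nat \<times> bool) set" where
  "prism_V n = {0..<n} \<times> UNIV"

definition prism_adj :: "nat \<Rightarrow> nat \<times> bool \<Rightarrow> nat \<times> bool \<Rightarrow> bool" where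
  "prism_adj n u v \<longleftrightarrow>
     (snd u = snd v \<and> (fst v = (fst u + 1) mod n \<or> fst u = (fst v + 1) mod n)) \<or>
     (fst u = fst v \<and> snd u \<noteq> snd v)"

end

theory Submission
  imports Defs
begin

text \<open>In an \<open>r\<close>-regular graph of order \<open>v\<close> every label is counted \<open>r\<close> times in the total
  weight, so an \<open>(a,d)\<close>-labeling satisfies \<open>r v (v+1) = v (2a + (v-1) d)\<close>. For a cubic graph
  the smallest weight \<open>a\<close> is at least \<open>1+2+3\<close>, which forces \<open>d < 3\<close>; since the order is even,
  \<open>3(v+1)\<close> is odd and so is \<open>d\<close>, hence \<open>d = 1\<close>. Conversely, labelling the outer cycle of the
  prism \<open>1,\<dots>,n\<close> and the inner cycle \<open>n+1, 2n, 2n-1, \<dots>, n+2\<close> yields the weights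
  \<open>2n+2, \<dots>, 4n+1\<close>.\<close>

lemma sum_vertex_weight_regular:
  assumes "finite V" and sym: "\<And>x y. adj x y \<Longrightarrow> adj y x"
    and reg: "\<And>x. x \<in> V \<Longrightarrow> card (nbhd V adj x) = r"
  shows "(\<Sum>x\<in>V. vertex_weight V adj f x) = int r * (\<Sum>x\<in>V. int (f x))"
proof -
  have "(\<Sum>x\<in>V. vertex_weight V adj f x) = (\<Sum>y\<in>V. \<Sum>x\<in>{x\<in>V. adj x y}. int (f y))"
    unfolding vertex_weight_def nbhd_def by (rule sum.swap_restrict[OF assms(1,1)])
  also have "\<dots> = (\<Sum>y\<in>V. int (card (nbhd V adj y)) * int (f y))"
    using sym by (intro sum.cong) (auto simp: nbhd_def intro!: arg_cong[where f = card])
  also have "\<dots> = int r * (\<Sum>x\<in>V. int (f x))"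
    by (simp add: reg sum_distrib_left)
  finally show ?thesis .
qed

lemma vertex_weight_ge_6_if_card_nbhd_3:
  assumes "card (nbhd V adj x) = 3" and "inj_on f V" and pos: "\<And>y. y \<in> V \<Longrightarrow> f y \<ge> 1"
  shows "6 \<le> vertex_weight V adj f x"
proof -
  obtain p q s where N: "nbhd V adj x = {p, q, s}" and "p \<noteq> q" "q \<noteq> s" "p \<noteq> s"
    using assms(1) card_3_iff by metis
  moreover have "p \<in> V" "q \<in> V" "s \<in> V"
    using N unfolding nbhd_def by auto
  ultimately have "f p \<noteq> f q" "f q \<noteq> f s" "f p \<noteq> f s" and "f p \<ge> 1" "f q \<ge> 1" "f s \<ge> 1"
    using \<open>inj_on f V\<close> pos by (auto dest: inj_onD)
  then show ?thesis
    using \<open>p \<noteq> q\<close> \<open>q \<noteq> s\<close> \<open>p \<noteq> s\<close> by (simp add: vertex_weight_def N)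
qed

lemma double_sum_labels:
  assumes "bij_betw f V {1..card V}"
  shows "2 * (\<Sum>x\<in>V. int (f x)) = int (card V) * (int (card V) + 1)"
  using sum.reindex_bij_betw[OF assms, of int] double_gauss_sum_from_Suc_0[of "card V"]
  by simp

lemma double_sum_vertex_weights:
  assumes "dist_antimagic_labeling V adj a d f" and "finite V" and "V \<noteq> {}"
  shows "2 * (\<Sum>x\<in>V. vertex_weight V adj f x) = int (card V) * (2 * a + int (card V - 1) * d)"
proof -
  obtain m where m: "card V = Suc m"
    using assms(2,3) by (cases "card V") auto
  have "(\<Sum>x\<in>V. vertex_weight V adj f x) = sum_mset (image_mset (vertex_weight V adj f) (mset_set V))"
    by (simp add: sum_unfold_sum_mset)
  also have "\<dots> = (\<Sum>i\<in>{0..<card V}. a + int i * d)"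
    using assms(1) unfolding dist_antimagic_labeling_def
    by (simp add: sum_mset_sum_list interv_sum_list_conv_sum_set_nat sum_unfold_sum_mset)
  also have "\<dots> = (\<Sum>i = 0..m. a + int i * d)"
    by (simp add: m atLeastLessThanSuc_atLeastAtMost)
  finally show ?thesis
    using double_arith_series[of a d m] m by (simp add: algebra_simps)
qed

lemma dist_antimagic_labeling_first_weight:
  assumes "dist_antimagic_labeling V adj a d f" and "finite V" and "V \<noteq> {}"
  obtains x where "x \<in> V" and "vertex_weight V adj f x = a"
proof -
  have "0 < card V"
    using assms(2,3) by (simp add: card_gt_0_iff)
  then have "a \<in># image_mset (vertex_weight V adj f) (mset_set V)"
    using assms(1) unfolding dist_antimagic_labeling_def by (force simp: upt_conv_Cons)
  then show thesis
    using that assms(2) by auto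
qed

lemma cubic_dist_antimagic_labeling_imp_d_eq_1:
  assumes "finite V" and "V \<noteq> {}" and "even (card V)"
    and sym: "\<And>x y. adj x y \<Longrightarrow> adj y x"
    and cubic: "\<And>x. x \<in> V \<Longrightarrow> card (nbhd V adj x) = 3"
    and lab: "dist_antimagic_labeling V adj a d f" and "d \<ge> 0"
  shows "d = 1"
proof -
  define v where "v = int (card V)"
  have bij: "bij_betw f V {1..card V}"
    using lab unfolding dist_antimagic_labeling_def by blast
  have "card V \<noteq> 0"
    using assms(1,2) by simp
  then have v2: "v \<ge> 2"
    using \<open>even (card V)\<close> unfolding v_def by presburger
  have "v * (3 * (v + 1)) = v * (2 * a + (v - 1) * d)"
    using double_sum_vertex_weights[OF lab assms(1,2)] double_sum_labels[OF bij]
      sum_vertex_weight_regular[OF assms(1) sym cubic, of f] v2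
    unfolding v_def by (simp add: of_nat_diff algebra_simps)
  then have balance: "3 * (v + 1) = 2 * a + (v - 1) * d"
    using v2 by simp
  obtain x where "x \<in> V" and "vertex_weight V adj f x = a"
    using dist_antimagic_labeling_first_weight[OF lab assms(1,2)] .
  moreover have "inj_on f V" "\<And>y. y \<in> V \<Longrightarrow> f y \<ge> 1"
    using bij by (auto simp: bij_betw_def dest: bij_betwE)
  ultimately have "a \<ge> 6"
    using vertex_weight_ge_6_if_card_nbhd_3 cubic by metis
  then have "(v - 1) * d < (v - 1) * 3"
    using balance by (simp add: algebra_simps)
  then have "d < 3"
    using v2 by (metis diff_ge_0_iff_ge dual_order.trans mult_left_less_imp_less one_le_numeral)
  moreover have "odd d"
  proof
    assume "even d"
    then obtain e where "d = 2 * e" ..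
    moreover obtain k where "v = 2 * k"
      using \<open>even (card V)\<close> unfolding v_def by (metis evenE of_nat_mult of_nat_numeral)
    ultimately have "2 * (3 * k + 1) + 1 = 2 * (a + (2 * k - 1) * e)"
      using balance by (simp add: algebra_simps)
    then show False
      by presburger
  qed
  ultimately show ?thesis
    using \<open>d \<ge> 0\<close> by presburger
qed

lemma image_mset_mset_set_eq_map_upt:
  assumes "finite V" and "inj_on g {0..<card V}" and "g ` {0..<card V} \<subseteq> w ` V"
  shows "image_mset w (mset_set V) = mset (map g [0..<card V])"
proof -
  have "card (g ` {0..<card V}) = card V"
    using assms(2) by (simp add: card_image)
  then have img: "w ` V = g ` {0..<card V}" and "card (w ` V) = card V"
    using card_seteq[OF finite_imageI[OF assms(1)] assms(3)] card_image_le[OF assms(1), of w] by auto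
  then have "inj_on w V"
    using assms(1) by (simp add: eq_card_imp_inj_on)
  then have "image_mset w (mset_set V) = mset_set (g ` {0..<card V})"
    by (simp add: image_mset_mset_set img)
  also have "\<dots> = mset (map g [0..<card V])"
    using assms(2) by (simp add: image_mset_mset_set[symmetric] mset_map)
  finally show ?thesis .
qed

definition cyc_succ :: "nat \<Rightarrow> nat \<Rightarrow> nat" where
  "cyc_succ n i = (if Suc i = n then 0 else Suc i)"

definition cyc_pred :: "nat \<Rightarrow> nat \<Rightarrow> nat" where
  "cyc_pred n i = (if i = 0 then n - 1 else i - 1)"

lemma finite_prism_V: "finite (prism_V n)"
  by (simp add: prism_V_def)

lemma card_prism_V: "card (prism_V n) = 2 * n"
  by (simp add: prism_V_def card_cartesian_product)

lemma mem_prism_V [simp]: "(i, b) \<in> prism_V n \<longleftrightarrow> i < n"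
  by (simp add: prism_V_def)

lemma prism_adj_sym: "prism_adj n u v \<Longrightarrow> prism_adj n v u"
  by (auto simp: prism_adj_def)

lemma prism_adj_iff:
  assumes "i < n" and "j < n"
  shows "prism_adj n (i, b) (j, c) \<longleftrightarrow>
    c = b \<and> (j = cyc_pred n i \<or> j = cyc_succ n i) \<or> j = i \<and> c = (\<not> b)"
proof -
  have "(i + 1) mod n = cyc_succ n i" and "(j + 1) mod n = cyc_succ n j"
    using assms by (auto simp: cyc_succ_def)
  then show ?thesis
    using assms by (auto simp: prism_adj_def cyc_succ_def cyc_pred_def)
qed

lemma prism_nbhd:
  assumes "i < n"
  shows "nbhd (prism_V n) (prism_adj n) (i, b) = {(cyc_pred n i, b), (cyc_succ n i, b), (i, \<not> b)}"
  using assms by (auto simp: nbhd_def prism_V_def prism_adj_iff cyc_succ_def cyc_pred_def)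

lemma card_prism_nbhd:
  assumes "n \<ge> 3" and "v \<in> prism_V n"
  shows "card (nbhd (prism_V n) (prism_adj n) v) = 3"
  using assms by (cases v) (auto simp: prism_nbhd cyc_succ_def cyc_pred_def)

lemma prism_vertex_weight:
  assumes "n \<ge> 3" and "i < n"
  shows "vertex_weight (prism_V n) (prism_adj n) f (i, b) =
    int (f (cyc_pred n i, b)) + int (f (cyc_succ n i, b)) + int (f (i, \<not> b))"
  using assms by (auto simp: vertex_weight_def prism_nbhd cyc_succ_def cyc_pred_def)

lemma prism_dist_antimagic_labeling_imp_d_eq_1:
  assumes "n \<ge> 3" and "d \<ge> 0" and "dist_antimagic_labeling (prism_V n) (prism_adj n) a d f"
  shows "d = 1"
proof (rule cubic_dist_antimagic_labeling_imp_d_eq_1)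
  show "prism_V n \<noteq> {}"
    using assms(1) by (auto simp: prism_V_def)
qed (use assms in \<open>auto simp: finite_prism_V card_prism_V prism_adj_sym card_prism_nbhd\<close>)

definition prism_label :: "nat \<Rightarrow> nat \<times> bool \<Rightarrow> nat" where
  "prism_label n = (\<lambda>(i, b). if \<not> b then i + 1 else if i = 0 then n + 1 else 2 * n + 1 - i)"

lemma bij_betw_prism_label: "bij_betw (prism_label n) (prism_V n) {1..2 * n}"
proof -
  have inj: "inj_on (prism_label n) (prism_V n)"
    by (auto simp: inj_on_def prism_V_def prism_label_def split: if_splits)
  moreover have "prism_label n ` prism_V n \<subseteq> {1..2 * n}"
    by (auto simp: prism_V_def prism_label_def)
  moreover have "card (prism_label n ` prism_V n) = card {1..2 * n}"
    using inj by (simp add: card_image card_prism_V)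
  ultimately show ?thesis
    by (simp add: bij_betw_def card_seteq)
qed

lemma prism_label_weight_outer:
  assumes "n \<ge> 3" and "i < n"
  shows "vertex_weight (prism_V n) (prism_adj n) (prism_label n) (i, False) =
    (if i = 0 then 2 * int n + 3 else if i = n - 1 then 2 * int n + 2 else 2 * int n + 3 + int i)"
  using assms by (auto simp: prism_vertex_weight prism_label_def cyc_succ_def cyc_pred_def of_nat_diff)

lemma prism_label_weight_inner:
  assumes "n \<ge> 3" and "i < n"
  shows "vertex_weight (prism_V n) (prism_adj n) (prism_label n) (i, True) =
    (if i = 0 then 3 * int n + 3 else if i = 1 then 3 * int n + 2
     else if i = n - 1 then 3 * int n + 4 else 4 * int n + 3 - int i)"
  using assms by (auto simp: prism_vertex_weight prism_label_def cyc_succ_def cyc_pred_def of_nat_diff)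

lemma prism_label_weights_cover:
  assumes "n \<ge> 3" and "k < 2 * n"
  shows "2 * int n + 2 + int k \<in> vertex_weight (prism_V n) (prism_adj n) (prism_label n) ` prism_V n"
proof -
  consider "k = 0" | "k = 1" | "2 \<le> k" "k < n" | "k = n" | "k = n + 1" | "k = n + 2" | "n + 3 \<le> k"
    by linarith
  then show ?thesis
  proof cases
    case 1
    then show ?thesis
      using assms by (intro rev_image_eqI[of "(n - 1, False)"]) (simp_all add: prism_label_weight_outer)
  next
    case 2
    then show ?thesis
      using assms by (intro rev_image_eqI[of "(0, False)"]) (simp_all add: prism_label_weight_outer)
  next
    case 3
    then show ?thesis
      using assms by (intro rev_image_eqI[of "(k - 1, False)"]) (simp_all add: prism_label_weight_outer of_nat_diff)
  next
    case 4
    then show ?thesis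
      using assms by (intro rev_image_eqI[of "(1, True)"]) (simp_all add: prism_label_weight_inner)
  next
    case 5
    then show ?thesis
      using assms by (intro rev_image_eqI[of "(0, True)"]) (simp_all add: prism_label_weight_inner)
  next
    case 6
    then show ?thesis
      using assms by (intro rev_image_eqI[of "(n - 1, True)"]) (simp_all add: prism_label_weight_inner)
  next
    case 7
    then show ?thesis
      using assms by (intro rev_image_eqI[of "(2 * n + 1 - k, True)"])
        (auto simp: prism_label_weight_inner of_nat_diff)
  qed
qed

lemma prism_label_dist_antimagic_labeling:
  assumes "n \<ge> 3"
  shows "dist_antimagic_labeling (prism_V n) (prism_adj n) (2 * int n + 2) 1 (prism_label n)"
proof -
  have "image_mset (vertex_weight (prism_V n) (prism_adj n) (prism_label n)) (mset_set (prism_V n)) =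
    mset (map (\<lambda>k. 2 * int n + 2 + int k * 1) [0..<card (prism_V n)])"
    using assms by (intro image_mset_mset_set_eq_map_upt)
      (auto simp: finite_prism_V card_prism_V inj_on_def prism_label_weights_cover)
  then show ?thesis
    unfolding dist_antimagic_labeling_def using bij_betw_prism_label card_prism_V by simp
qed

theorem mainTheorem9:
  fixes n :: nat and d :: int
  assumes "n \<ge> 3" and "d \<ge> 0"
  shows "(\<exists>a. dist_antimagic (prism_V n) (prism_adj n) a d) \<longleftrightarrow> d = 1"
proof
  assume "\<exists>a. dist_antimagic (prism_V n) (prism_adj n) a d"
  then obtain a f where "dist_antimagic_labeling (prism_V n) (prism_adj n) a d f"
    unfolding dist_antimagic_def by blast
  with assms show "d = 1"
    by (rule prism_dist_antimagic_labeling_imp_d_eq_1)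
next
  assume "d = 1"
  then show "\<exists>a. dist_antimagic (prism_V n) (prism_adj n) a d"
    unfolding dist_antimagic_def using prism_label_dist_antimagic_labeling[OF assms(1)] by auto
qed

end
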